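(* Let $(X,Y,\eta,\mu,\psi,\epsilon,\delta,\phi)$ be a left Frobenius pair in a monoidal category $(\mathfrak{C},\otimes,\mathbbm{1})$. Then $\phi$ is a homomorphism of right $X$-modules and $\psi$ is a homomorphism of right $Y$-comodules, i.e. \[ (Y\otimes \mu)\circ(\phi\otimes X)=\phi\circ\mu \colon X\otimes X\to Y\otimes X, \qquad (\psi\otimes Y)\circ(X\otimes\delta)=\delta\circ\psi\colon X\otimes Y\to Y\otimes Y. \]
   Context: Throughout, $(\mathfrak{C},\otimes,\mathbbm{1})$ is a monoidal category; associativity and unit isomorphisms are suppressed (identifying $\mathbbm{1}\otimes A=A=A\otimes\mathbbm{1}$). A \emph{left Frobenius pair} in $\mathfrak{C}$ consists of objects $X,Y$ and morphisms $\epsilon\colon Y\to\mathbbm{1}$, $\eta\colon\mathbbm{1}\to X$, $\delta\colon Y\to Y\otimes Y$, $\mu\colon X\otimes X\to X$, $\phi\colon X\to Y\otimes X$, $\psi\colon X\otimes Y\to Y$ such that: (1a) $(X,\eta,\mu)$ is an associative unital monoid: $\mu(\mu\otimes X)=\mu(X\otimes\mu)$, $\mu(\eta\otimes X)=\mathrm{id}_X=\mu(X\otimes\eta)$; (1b) $(Y,\epsilon,\delta)$ is a coassociative counital comonoid: $(\delta\otimes Y)\delta=(Y\otimes\delta)\delta$, $(\epsilon\otimes Y)\delta=\mathrm{id}_Y=(Y\otimes\epsilon)\delta$; (2a) $\psi$ is a left $X$-module structure on $Y$: $\psi(\mu\otimes Y)=\psi(X\otimes\psi)$, $\psi(\eta\otimes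 Y)=\mathrm{id}_Y$; (2b) $\phi$ is a left $Y$-comodule structure on $X$: $(\delta\otimes X)\phi=(Y\otimes\phi)\phi$, $(\epsilon\otimes X)\phi=\mathrm{id}_X$; (3a) $\phi$ is a left $X$-module map: $\phi\circ\mu=(\psi\otimes X)\circ(X\otimes\phi)$; (3b) $\psi$ is a left $Y$-comodule map: $\delta\circ\psi=(Y\otimes\psi)\circ(\phi\otimes Y)$. *)

theory Defs
  imports Main
begin

text \<open>A monoidal category, presented in strict form (associativity and unit
isomorphisms suppressed, as in the paper).\<close>

record ('o, 'm) moncat =
  Dom :: "'m \<Rightarrow> 'o"
  Cod :: "'m \<Rightarrow> 'o"
  Cmp :: "'m \<Rightarrow> 'm \<Rightarrow> 'm"
  Idm :: "'o \<Rightarrow> 'm"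
  TObj :: "'o \<Rightarrow> 'o \<Rightarrow> 'o"
  TMor :: "'m \<Rightarrow> 'm \<Rightarrow> 'm"
  Unit :: "'o"

definition hom :: "('o, 'm, 'z) moncat_scheme \<Rightarrow> 'o \<Rightarrow> 'o \<Rightarrow> 'm set" where
  "hom C A B = {f. Dom C f = A \<and> Cod C f = B}"

definition strict_monoidal_category :: "('o, 'm, 'z) moncat_scheme \<Rightarrow> bool" where
  "strict_monoidal_category C \<longleftrightarrow>
     \<comment> \<open>category axioms\<close>
     (\<forall>A. Dom C (Idm C A) = A \<and> Cod C (Idm C A) = A) \<and>
     (\<forall>f g. Cod C f = Dom C g \<longrightarrow>
        Dom C (Cmp C g f) = Dom C f \<and> Cod C (Cmp C g f) = Cod C g) \<and>
     (\<forall>f. Cmp C f (Idm C (Dom C f)) = f \<and> Cmp C (Idm C (Cod C f)) f = f) \<and>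
     (\<forall>f g h. Cod C f = Dom C g \<and> Cod C g = Dom C h \<longrightarrow>
        Cmp C h (Cmp C g f) = Cmp C (Cmp C h g) f) \<and>
     \<comment> \<open>tensor is a bifunctor\<close>
     (\<forall>f g. Dom C (TMor C f g) = TObj C (Dom C f) (Dom C g) \<and>
            Cod C (TMor C f g) = TObj C (Cod C f) (Cod C g)) \<and>
     (\<forall>A B. TMor C (Idm C A) (Idm C B) = Idm C (TObj C A B)) \<and>
     (\<forall>f g f' g'. Cod C f = Dom C g \<and> Cod C f' = Dom C g' \<longrightarrow>
        TMor C (Cmp C g f) (Cmp C g' f') = Cmp C (TMor C g g') (TMor C f f')) \<and>
     \<comment> \<open>strict associativity and unit\<close>
     (\<forall>A B D. TObj C (TObj C A B) D = TObj C A (TObj C B D)) \<and>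
     (\<forall>A. TObj C (Unit C) A = A \<and> TObj C A (Unit C) = A) \<and>
     (\<forall>f g h. TMor C (TMor C f g) h = TMor C f (TMor C g h)) \<and>
     (\<forall>f. TMor C (Idm C (Unit C)) f = f \<and> TMor C f (Idm C (Unit C)) = f)"

definition left_frobenius_pair ::
  "('o, 'm, 'z) moncat_scheme \<Rightarrow> 'o \<Rightarrow> 'o \<Rightarrow> 'm \<Rightarrow> 'm \<Rightarrow> 'm \<Rightarrow> 'm \<Rightarrow> 'm \<Rightarrow> 'm \<Rightarrow> bool"
where
  "left_frobenius_pair C X Y eps eta delta mu phi psi \<longleftrightarrow>
    (let T = TMor C; cp = Cmp C; iX = Idm C X; iY = Idm C Y in
     eps \<in> hom C Y (Unit C) \<and>
     eta \<in> hom C (Unit C) X \<and>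
     delta \<in> hom C Y (TObj C Y Y) \<and>
     mu \<in> hom C (TObj C X X) X \<and>
     phi \<in> hom C X (TObj C Y X) \<and>
     psi \<in> hom C (TObj C X Y) Y \<and>
     \<comment> \<open>(1a)\<close>
     cp mu (T mu iX) = cp mu (T iX mu) \<and>
     cp mu (T eta iX) = iX \<and> cp mu (T iX eta) = iX \<and>
     \<comment> \<open>(1b)\<close>
     cp (T delta iY) delta = cp (T iY delta) delta \<and>
     cp (T eps iY) delta = iY \<and> cp (T iY eps) delta = iY \<and>
     \<comment> \<open>(2a)\<close>
     cp psi (T mu iY) = cp psi (T iX psi) \<and>
     cp psi (T eta iY) = iY \<and>
     \<comment> \<open>(2b)\<close>
     cp (T delta iX) phi = cp (T iY phi) phi \<and>
     cp (T eps iX) phi = iX \<and>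
     \<comment> \<open>(3a)\<close>
     cp phi mu = cp (T psi iX) (T iX phi) \<and>
     \<comment> \<open>(3b)\<close>
     cp delta psi = cp (T iY psi) (T phi iY))"

end

theory Submission
  imports Defs
begin

text \<open>Put e = \<phi>\<eta> : 1 \<rightarrow> Y\<otimes>X and f = \<epsilon>\<psi> : X\<otimes>Y \<rightarrow> 1 (the copairing and pairing below).
  Feeding the unit \<eta> into, resp. applying the counit \<epsilon> to, (3a) and (3b) expresses all four
  structure maps through e and f:
  \<delta> = (Y\<otimes>\<psi>)(e\<otimes>Y), \<phi> = (\<psi>\<otimes>X)(X\<otimes>e), \<mu> = (f\<otimes>X)(X\<otimes>\<phi>) and \<psi> = (Y\<otimes>f)(\<phi>\<otimes>Y).
  Substituting these into either side of the claimed identities and using the interchange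
  law, both sides of the first become (Y\<otimes>f\<otimes>X)(\<phi>\<otimes>\<phi>) and both sides of the second
  become (\<psi>\<otimes>\<psi>)(X\<otimes>e\<otimes>Y).\<close>

locale strict_monoidal =
  fixes C :: "('o, 'm, 'z) moncat_scheme"
  assumes strict_monoidal: "strict_monoidal_category C"
begin

abbreviation comp :: "'m \<Rightarrow> 'm \<Rightarrow> 'm" (infixr "\<cdot>" 55) where "g \<cdot> f \<equiv> Cmp C g f"
abbreviation tensor :: "'m \<Rightarrow> 'm \<Rightarrow> 'm" (infixr "\<otimes>" 70) where "f \<otimes> g \<equiv> TMor C f g"
abbreviation tensor_obj :: "'o \<Rightarrow> 'o \<Rightarrow> 'o" (infixr "\<otimes>\<^sub>o" 70) where "A \<otimes>\<^sub>o B \<equiv> TObj C A B"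
abbreviation dom :: "'m \<Rightarrow> 'o" where "dom \<equiv> Dom C"
abbreviation cod :: "'m \<Rightarrow> 'o" where "cod \<equiv> Cod C"
abbreviation id :: "'o \<Rightarrow> 'm" where "id \<equiv> Idm C"
abbreviation unit :: "'o" where "unit \<equiv> Unit C"

lemma dom_id [simp]: "dom (id A) = A"
  and cod_id [simp]: "cod (id A) = A"
  and dom_comp [simp]: "cod f = dom g \<Longrightarrow> dom (g \<cdot> f) = dom f"
  and cod_comp [simp]: "cod f = dom g \<Longrightarrow> cod (g \<cdot> f) = cod g"
  and comp_id [simp]: "dom f = A \<Longrightarrow> f \<cdot> id A = f"
  and id_comp [simp]: "cod f = A \<Longrightarrow> id A \<cdot> f = f"
  and comp_assoc: "cod f = dom g \<Longrightarrow> cod g = dom h \<Longrightarrow> h \<cdot> g \<cdot> f = (h \<cdot> g) \<cdot> f"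
  and dom_tensor [simp]: "dom (f \<otimes> g) = dom f \<otimes>\<^sub>o dom g"
  and cod_tensor [simp]: "cod (f \<otimes> g) = cod f \<otimes>\<^sub>o cod g"
  and tensor_id [simp]: "id A \<otimes> id B = id (A \<otimes>\<^sub>o B)"
  and interchange:
    "cod f = dom g \<Longrightarrow> cod f' = dom g' \<Longrightarrow> (g \<otimes> g') \<cdot> (f \<otimes> f') = (g \<cdot> f) \<otimes> (g' \<cdot> f')"
  and tensor_obj_assoc [simp]: "(A \<otimes>\<^sub>o B) \<otimes>\<^sub>o D = A \<otimes>\<^sub>o B \<otimes>\<^sub>o D"
  and tensor_obj_unit [simp]: "unit \<otimes>\<^sub>o A = A" "A \<otimes>\<^sub>o unit = A"
  and tensor_assoc [simp]: "(f \<otimes> g) \<otimes> h = f \<otimes> g \<otimes> h"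
  and tensor_unit [simp]: "id unit \<otimes> f = f" "f \<otimes> id unit = f"
  using strict_monoidal unfolding strict_monoidal_category_def by auto

lemma id_tensor_id_tensor [simp]: "id A \<otimes> id B \<otimes> g = id (A \<otimes>\<^sub>o B) \<otimes> g"
  by (metis tensor_assoc tensor_id)

lemma id_tensor_comp: "cod f = dom g \<Longrightarrow> id A \<otimes> (g \<cdot> f) = (id A \<otimes> g) \<cdot> (id A \<otimes> f)"
  by (simp add: interchange)

lemma comp_tensor_id: "cod f = dom g \<Longrightarrow> (g \<cdot> f) \<otimes> id A = (g \<otimes> id A) \<cdot> (f \<otimes> id A)"
  by (simp add: interchange)

lemma tensor_eq_comp_left_first: "f \<otimes> g = (f \<otimes> id (cod g)) \<cdot> (id (dom f) \<otimes> g)"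
  by (simp add: interchange)

lemma tensor_eq_comp_right_first: "f \<otimes> g = (id (cod f) \<otimes> g) \<cdot> (f \<otimes> id (dom g))"
  by (simp add: interchange)

end

locale left_frobenius = strict_monoidal +
  fixes X Y and eps eta delta mu phi psi
  assumes frobenius: "left_frobenius_pair C X Y eps eta delta mu phi psi"
begin

lemma dom_eps [simp]: "dom eps = Y" and cod_eps [simp]: "cod eps = unit"
  and dom_eta [simp]: "dom eta = unit" and cod_eta [simp]: "cod eta = X"
  and dom_delta [simp]: "dom delta = Y" and cod_delta [simp]: "cod delta = Y \<otimes>\<^sub>o Y"
  and dom_mu [simp]: "dom mu = X \<otimes>\<^sub>o X" and cod_mu [simp]: "cod mu = X"
  and dom_phi [simp]: "dom phi = X" and cod_phi [simp]: "cod phi = Y \<otimes>\<^sub>o X"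
  and dom_psi [simp]: "dom psi = X \<otimes>\<^sub>o Y" and cod_psi [simp]: "cod psi = Y"
  and mu_right_unit: "mu \<cdot> (id X \<otimes> eta) = id X"
  and delta_right_counit: "(id Y \<otimes> eps) \<cdot> delta = id Y"
  and psi_unit: "psi \<cdot> (eta \<otimes> id Y) = id Y"
  and phi_counit: "(eps \<otimes> id X) \<cdot> phi = id X"
  and phi_left_module_map: "phi \<cdot> mu = (psi \<otimes> id X) \<cdot> (id X \<otimes> phi)"
  and psi_left_comodule_map: "delta \<cdot> psi = (id Y \<otimes> psi) \<cdot> (phi \<otimes> id Y)"
  using frobenius unfolding left_frobenius_pair_def Let_def hom_def by auto

definition copairing where "copairing = phi \<cdot> eta"

definition pairing where "pairing = eps \<cdot> psi"

lemma dom_copairing [simp]: "dom copairing = unit"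
  and cod_copairing [simp]: "cod copairing = Y \<otimes>\<^sub>o X"
  and dom_pairing [simp]: "dom pairing = X \<otimes>\<^sub>o Y"
  and cod_pairing [simp]: "cod pairing = unit"
  by (simp_all add: copairing_def pairing_def)

lemma delta_eq_copairing: "delta = (id Y \<otimes> psi) \<cdot> (copairing \<otimes> id Y)"
proof -
  have "delta = delta \<cdot> psi \<cdot> (eta \<otimes> id Y)" by (simp add: psi_unit)
  also have "\<dots> = (id Y \<otimes> psi) \<cdot> (phi \<otimes> id Y) \<cdot> (eta \<otimes> id Y)"
    by (simp add: comp_assoc psi_left_comodule_map)
  finally show ?thesis by (simp add: comp_tensor_id copairing_def)
qed

lemma phi_eq_copairing: "phi = (psi \<otimes> id X) \<cdot> (id X \<otimes> copairing)"
proof -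
  have "phi = phi \<cdot> mu \<cdot> (id X \<otimes> eta)" by (simp add: mu_right_unit)
  also have "\<dots> = (psi \<otimes> id X) \<cdot> (id X \<otimes> phi) \<cdot> (id X \<otimes> eta)"
    by (simp add: comp_assoc phi_left_module_map)
  finally show ?thesis by (simp add: id_tensor_comp copairing_def)
qed

lemma mu_eq_pairing: "mu = (pairing \<otimes> id X) \<cdot> (id X \<otimes> phi)"
proof -
  have "mu = ((eps \<otimes> id X) \<cdot> phi) \<cdot> mu" by (simp add: phi_counit)
  also have "\<dots> = (eps \<otimes> id X) \<cdot> (psi \<otimes> id X) \<cdot> (id X \<otimes> phi)"
    by (simp add: comp_assoc[symmetric] phi_left_module_map)
  finally show ?thesis by (simp add: comp_assoc comp_tensor_id pairing_def)
qed

lemma psi_eq_pairing: "psi = (id Y \<otimes> pairing) \<cdot> (phi \<otimes> id Y)"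
proof -
  have "psi = ((id Y \<otimes> eps) \<cdot> delta) \<cdot> psi" by (simp add: delta_right_counit)
  also have "\<dots> = (id Y \<otimes> eps) \<cdot> (id Y \<otimes> psi) \<cdot> (phi \<otimes> id Y)"
    by (simp add: comp_assoc[symmetric] psi_left_comodule_map)
  finally show ?thesis by (simp add: comp_assoc id_tensor_comp pairing_def)
qed

lemma phi_right_module_map: "(id Y \<otimes> mu) \<cdot> (phi \<otimes> id X) = phi \<cdot> mu"
proof -
  have "(id Y \<otimes> mu) \<cdot> (phi \<otimes> id X)
      = (id Y \<otimes> pairing \<otimes> id X) \<cdot> (id (Y \<otimes>\<^sub>o X) \<otimes> phi) \<cdot> (phi \<otimes> id X)"
    by (subst mu_eq_pairing) (simp add: id_tensor_comp comp_assoc)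
  also have "\<dots> = (id Y \<otimes> pairing \<otimes> id X) \<cdot> (phi \<otimes> phi)"
    by (simp add: tensor_eq_comp_right_first[of phi phi])
  also have "\<dots> = (id Y \<otimes> pairing \<otimes> id X) \<cdot> (phi \<otimes> id (Y \<otimes>\<^sub>o X)) \<cdot> (id X \<otimes> phi)"
    by (simp add: tensor_eq_comp_left_first[of phi phi])
  also have "\<dots> = (psi \<otimes> id X) \<cdot> (id X \<otimes> phi)"
    by (subst psi_eq_pairing) (simp add: comp_tensor_id comp_assoc)
  finally show ?thesis by (simp add: phi_left_module_map)
qed

lemma psi_right_comodule_map: "(psi \<otimes> id Y) \<cdot> (id X \<otimes> delta) = delta \<cdot> psi"
proof -
  have "(psi \<otimes> id Y) \<cdot> (id X \<otimes> delta)
      = (psi \<otimes> id Y) \<cdot> (id (X \<otimes>\<^sub>o Y) \<otimes> psi) \<cdot> (id X \<otimes> copairing \<otimes> id Y)"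
    by (subst delta_eq_copairing) (simp add: id_tensor_comp)
  also have "\<dots> = (psi \<otimes> psi) \<cdot> (id X \<otimes> copairing \<otimes> id Y)"
    by (simp add: comp_assoc tensor_eq_comp_left_first[of psi psi])
  also have "\<dots> = (id Y \<otimes> psi) \<cdot> (psi \<otimes> id (X \<otimes>\<^sub>o Y)) \<cdot> (id X \<otimes> copairing \<otimes> id Y)"
    by (simp add: comp_assoc tensor_eq_comp_right_first[of psi psi])
  also have "\<dots> = (id Y \<otimes> psi) \<cdot> (phi \<otimes> id Y)"
    by (subst phi_eq_copairing) (simp add: comp_tensor_id)
  finally show ?thesis by (simp add: psi_left_comodule_map)
qed

end

theorem mainTheorem1:
  fixes C :: "('o, 'm, 'z) moncat_scheme"
  assumes "strict_monoidal_category C"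
    and "left_frobenius_pair C X Y eps eta delta mu phi psi"
  shows "Cmp C (TMor C (Idm C Y) mu) (TMor C phi (Idm C X)) = Cmp C phi mu \<and>
         Cmp C (TMor C psi (Idm C Y)) (TMor C (Idm C X) delta) = Cmp C delta psi"
proof -
  interpret left_frobenius C X Y eps eta delta mu phi psi
    using assms by (intro left_frobenius.intro strict_monoidal.intro left_frobenius_axioms.intro)
  show ?thesis using phi_right_module_map psi_right_comodule_map by simp
qed

end
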